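(* Let $d$ be a positive integer, and let $T$ be the rooted tree with root $r$ in which every leaf has depth $d$ and every non-leaf vertex has degree $3$. Let $p\in[0,1]$ and let $S$ be a random subset of $V(T)$ containing each vertex independently with probability $p$. Then $$\mathbf{P}\left[w_{(T,S)}(r)<1\right]\leq\frac{p}{2}+\frac{3}{2}e^{-pd}.$$
   Context: For a graph $G$, a set $S\subseteq V(G)$, and vertices $u,v$ with $u\in S$ or $v\in S$, ${\rm dist}_{(G,S)}(u,v)$ is the minimum number of edges of a path $P$ in $G$ between $u$ and $v$ such that $S$ contains exactly one endvertex of $P$ and no internal vertex of $P$, and $\infty$ if no such path exists (so ${\rm dist}_{(G,S)}(u,u)=0$ for $u\in S$). For $u\in V(G)$, $w_{(G,S)}(u)=\sum_{v\in S}(1/2)^{{\rm dist}_{(G,S)}(u,v)-1}$ with $(1/2)^{\infty}=0$. The depth of a vertex in a rooted tree is its distance from the root. *)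

theory Defs
  imports Complex_Main "HOL-Library.Extended_Nat"
begin

definition is_path :: "'a set \<Rightarrow> ('a \<Rightarrow> 'a \<Rightarrow> bool) \<Rightarrow> 'a list \<Rightarrow> bool" where
  "is_path V E xs \<longleftrightarrow> xs \<noteq> [] \<and> set xs \<subseteq> V \<and> distinct xs \<and>
     (\<forall>i. Suc i < length xs \<longrightarrow> E (xs ! i) (xs ! Suc i))"

definition S_path :: "'a set \<Rightarrow> ('a \<Rightarrow> 'a \<Rightarrow> bool) \<Rightarrow> 'a set \<Rightarrow> 'a \<Rightarrow> 'a \<Rightarrow> 'a list \<Rightarrow> bool" where
  "S_path V E S u v xs \<longleftrightarrow> is_path V E xs \<and> hd xs = u \<and> last xs = v \<and>
     card ({hd xs, last xs} \<inter> S) = 1 \<and>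
     (\<forall>i. 0 < i \<and> Suc i < length xs \<longrightarrow> xs ! i \<notin> S)"

text \<open>dist_(G,S)(u,v): minimum number of edges of such a path, \<infinity> if none
(Inf of the empty set of extended naturals is \<infinity>).\<close>

definition distS :: "'a set \<Rightarrow> ('a \<Rightarrow> 'a \<Rightarrow> bool) \<Rightarrow> 'a set \<Rightarrow> 'a \<Rightarrow> 'a \<Rightarrow> enat" where
  "distS V E S u v = Inf {enat (length xs - 1) | xs. S_path V E S u v xs}"

definition wS :: "'a set \<Rightarrow> ('a \<Rightarrow> 'a \<Rightarrow> bool) \<Rightarrow> 'a set \<Rightarrow> 'a \<Rightarrow> real" where
  "wS V E S u = (\<Sum>v\<in>S. (case distS V E S u v of
                          enat n \<Rightarrow> (1/2::real) powr (real n - 1)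
                        | \<infinity> \<Rightarrow> 0))"

text \<open>The rooted tree T_d: vertices are lists (addresses from the root []),
the root has children [0],[1],[2]; every other non-leaf vertex xs has children
xs@[0], xs@[1]; leaves are the lists of length d. Thus all leaves have depth d and
every non-leaf vertex has degree 3.\<close>

definition tree_V :: "nat \<Rightarrow> nat list set" where
  "tree_V d = {xs. length xs \<le> d \<and> (xs \<noteq> [] \<longrightarrow> hd xs < 3) \<and> (\<forall>x\<in>set (tl xs). x < 2)}"

definition tree_E :: "nat list \<Rightarrow> nat list \<Rightarrow> bool" where
  "tree_E xs ys \<longleftrightarrow> (\<exists>a. ys = xs @ [a]) \<or> (\<exists>a. xs = ys @ [a])"

definition tree_root :: "nat list" where
  "tree_root = []"

definition rand_subset_prob :: "'a set \<Rightarrow> real \<Rightarrow> ('a set \<Rightarrow> bool) \<Rightarrow> real" where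
  "rand_subset_prob V p P =
     (\<Sum>S\<in>Pow V. if P S then p ^ card S * (1 - p) ^ (card V - card S) else 0)"

end

theory Submission
  imports Defs
begin

text \<open>If the root lies in S it contributes 2 to the weight on its own. Otherwise every leaf
whose root path meets S lies below a first hit v, i.e. a vertex of S with no proper ancestor
in S; the prefix path from the root to v gives dist(r, v) \<le> |v|, so v contributes at least
2^(1-|v|), while at most 2^(d-|v|) of the 3 \<cdot> 2^(d-1) leaves lie below v. Hence
w(r) < 1 forces more than 2^d leaves whose root path avoids S, and by Markov's inequality
P[w(r) < 1] \<le> 2^(-d) E[#such leaves] = (3/2)(1-p)^d \<le> (3/2) e^(-pd).\<close>

definition rand_subset_expect :: "'a set \<Rightarrow> real \<Rightarrow> ('a set \<Rightarrow> real) \<Rightarrow> real" where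
  "rand_subset_expect V p f = (\<Sum>S\<in>Pow V. p ^ card S * (1 - p) ^ (card V - card S) * f S)"

lemma rand_subset_prob_eq_expect:
  "rand_subset_prob V p P = rand_subset_expect V p (\<lambda>S. if P S then 1 else 0)"
  unfolding rand_subset_prob_def rand_subset_expect_def by (intro sum.cong) auto

lemma rand_subset_expect_mono:
  assumes "0 \<le> p" "p \<le> 1" "\<And>S. S \<subseteq> V \<Longrightarrow> f S \<le> g S"
  shows "rand_subset_expect V p f \<le> rand_subset_expect V p g"
  unfolding rand_subset_expect_def using assms by (intro sum_mono mult_left_mono) auto

lemma rand_subset_expect_divide:
  "rand_subset_expect V p (\<lambda>S. f S / c) = rand_subset_expect V p f / c"
  unfolding rand_subset_expect_def by (simp add: sum_divide_distrib)

lemma rand_subset_prob_disjoint: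
  fixes p :: real
  assumes V: "finite V" and A: "A \<subseteq> V"
  shows "rand_subset_prob V p (\<lambda>S. A \<inter> S = {}) = (1 - p) ^ card A"
proof -
  let ?q = "\<lambda>x. if x \<in> A then 0 else p"
  have "(1 - p) ^ card A = (\<Prod>x\<in>V. if x \<in> A then 1 - p else 1)"
    using prod.If_cases[OF V, of "\<lambda>x. x \<in> A" "\<lambda>_. 1 - p" "\<lambda>_. 1"] A
    by (simp add: Int_absorb1 Int_absorb2)
  also have "\<dots> = (\<Prod>x\<in>V. ?q x + (1 - p))"
    by (intro prod.cong) auto
  also have "\<dots> = (\<Sum>X\<in>Pow V. (\<Prod>x\<in>X. ?q x) * (\<Prod>x\<in>V - X. 1 - p))"
    by (rule prod_add[OF V])
  also have "\<dots> = rand_subset_prob V p (\<lambda>S. A \<inter> S = {})"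
    unfolding rand_subset_prob_def
  proof (rule sum.cong[OF refl])
    fix X assume X: "X \<in> Pow V"
    then have fX: "finite X" using V finite_subset by blast
    have "(\<Prod>x\<in>X. ?q x) = (if A \<inter> X = {} then p ^ card X else 0)"
    proof (cases "A \<inter> X = {}")
      case True
      then have "(\<Prod>x\<in>X. ?q x) = (\<Prod>x\<in>X. p)" by (intro prod.cong) auto
      with True show ?thesis by simp
    qed (use fX in \<open>auto intro: prod_zero\<close>)
    moreover have "(\<Prod>x\<in>V - X. 1 - p) = (1 - p) ^ (card V - card X)"
      using X fX by (simp add: card_Diff_subset)
    ultimately show "(\<Prod>x\<in>X. ?q x) * (\<Prod>x\<in>V - X. 1 - p)
        = (if A \<inter> X = {} then p ^ card X * (1 - p) ^ (card V - card X) else 0)"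
      by simp
  qed
  finally show ?thesis ..
qed

lemma rand_subset_expect_count_disjoint:
  fixes p :: real
  assumes "finite V" "finite L" "\<And>l. l \<in> L \<Longrightarrow> A l \<subseteq> V"
  shows "rand_subset_expect V p (\<lambda>S. real (card {l \<in> L. A l \<inter> S = {}}))
       = (\<Sum>l\<in>L. (1 - p) ^ card (A l))"
proof -
  have "\<And>S. real (card {l \<in> L. A l \<inter> S = {}}) = (\<Sum>l\<in>L. if A l \<inter> S = {} then 1 else 0)"
    using assms(2) by (simp add: sum.If_cases Int_def)
  then have "rand_subset_expect V p (\<lambda>S. real (card {l \<in> L. A l \<inter> S = {}}))
      = (\<Sum>l\<in>L. rand_subset_prob V p (\<lambda>S. A l \<inter> S = {}))"
    unfolding rand_subset_prob_eq_expect rand_subset_expect_def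
    by (simp add: sum_distrib_left sum.swap[of _ "Pow V"])
  also have "\<dots> = (\<Sum>l\<in>L. (1 - p) ^ card (A l))"
    using assms by (simp add: rand_subset_prob_disjoint)
  finally show ?thesis .
qed

lemma finite_tree_V: "finite (tree_V d)"
proof (rule finite_subset[OF _ finite_lists_length_le])
  show "tree_V d \<subseteq> {xs. set xs \<subseteq> {0..<3} \<and> length xs \<le> d}"
  proof
    fix xs assume "xs \<in> tree_V d"
    then show "xs \<in> {xs. set xs \<subseteq> {0..<3} \<and> length xs \<le> d}"
      unfolding tree_V_def by (cases xs) auto
  qed
qed auto

lemma take_in_tree_V: "v \<in> tree_V d \<Longrightarrow> take k v \<in> tree_V d"
  unfolding tree_V_def by (cases v; cases k) (auto dest: in_set_takeD)

definition leaves :: "nat \<Rightarrow> nat list set" where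
  "leaves d = {l \<in> tree_V d. length l = d}"

lemma finite_leaves: "finite (leaves d)"
  unfolding leaves_def using finite_tree_V by simp

lemma card_leaves:
  assumes "d \<ge> 1"
  shows "card (leaves d) = 3 * 2 ^ (d - 1)"
proof -
  let ?B = "{0..<3::nat} \<times> {xs. set xs \<subseteq> {0..<2::nat} \<and> length xs = d - 1}"
  have "leaves d = (\<lambda>(a, xs). a # xs) ` ?B"
  proof (rule set_eqI, rule iffI)
    fix l assume "l \<in> leaves d"
    then have "length l = d" "hd l < 3" "\<forall>x\<in>set (tl l). x < 2" "l \<noteq> []"
      using assms unfolding leaves_def tree_V_def by auto
    then have "l = (\<lambda>(a, xs). a # xs) (hd l, tl l)" "(hd l, tl l) \<in> ?B"
      by auto
    then show "l \<in> (\<lambda>(a, xs). a # xs) ` ?B" by blast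
  qed (use assms in \<open>auto simp: leaves_def tree_V_def\<close>)
  moreover have "inj_on (\<lambda>(a, xs). a # xs) ?B"
    by (auto simp: inj_on_def)
  ultimately have "card (leaves d) = card ?B"
    by (simp add: card_image)
  then show ?thesis
    by (simp add: card_cartesian_product card_lists_length_eq)
qed

definition nonempty_prefixes :: "'a list \<Rightarrow> 'a list set" where
  "nonempty_prefixes l = (\<lambda>k. take k l) ` {1..length l}"

lemma card_nonempty_prefixes: "card (nonempty_prefixes l) = length l"
proof -
  have "inj_on (\<lambda>k. take k l) {1..length l}"
    by (rule inj_onI) (metis atLeastAtMost_iff length_take min.absorb2)
  then show ?thesis unfolding nonempty_prefixes_def by (simp add: card_image)
qed

lemma nonempty_prefixes_subset_tree_V:
  "l \<in> tree_V d \<Longrightarrow> nonempty_prefixes l \<subseteq> tree_V d"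
  unfolding nonempty_prefixes_def using take_in_tree_V by auto

definition leaves_below :: "nat \<Rightarrow> nat list \<Rightarrow> nat list set" where
  "leaves_below d v = {l \<in> leaves d. take (length v) l = v}"

lemma card_leaves_below:
  assumes "v \<noteq> []"
  shows "card (leaves_below d v) \<le> 2 ^ (d - length v)"
proof -
  let ?C = "{s. set s \<subseteq> {0..<2::nat} \<and> length s = d - length v}"
  have "leaves_below d v \<subseteq> (\<lambda>s. v @ s) ` ?C"
  proof
    fix l assume "l \<in> leaves_below d v"
    then have l: "l \<in> tree_V d" "length l = d" "take (length v) l = v"
      unfolding leaves_below_def leaves_def by auto
    have "drop (length v) l = drop (length v - 1) (tl l)"
      using assms by (cases v; cases l) auto
    then have "set (drop (length v) l) \<subseteq> set (tl l)"
      by (metis set_drop_subset)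
    moreover have "set (tl l) \<subseteq> {0..<2}"
      using l(1) unfolding tree_V_def by auto
    moreover have "l = v @ drop (length v) l"
      using l(3) by (metis append_take_drop_id)
    ultimately show "l \<in> (\<lambda>s. v @ s) ` ?C"
      using l(2) by (intro image_eqI[of _ _ "drop (length v) l"]) auto
  qed
  then have "card (leaves_below d v) \<le> card ((\<lambda>s. v @ s) ` ?C)"
    by (rule card_mono[rotated]) (simp add: finite_lists_length_eq)
  also have "\<dots> \<le> card ?C"
    by (rule card_image_le) (simp add: finite_lists_length_eq)
  also have "\<dots> = 2 ^ (d - length v)"
    by (simp add: card_lists_length_eq)
  finally show ?thesis .
qed

definition first_hits :: "'a list set \<Rightarrow> 'a list set" where
  "first_hits S = {v \<in> S. \<forall>j<length v. take j v \<notin> S}"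

lemma leaves_hit_subset_first_hits:
  "{l \<in> leaves d. nonempty_prefixes l \<inter> S \<noteq> {}} \<subseteq> (\<Union>v\<in>first_hits S. leaves_below d v)"
proof
  fix l assume "l \<in> {l \<in> leaves d. nonempty_prefixes l \<inter> S \<noteq> {}}"
  then have l: "l \<in> leaves d" and "nonempty_prefixes l \<inter> S \<noteq> {}" by auto
  then obtain k where k: "k \<le> length l" "take k l \<in> S"
    unfolding nonempty_prefixes_def by auto
  define k0 where "k0 = (LEAST k. take k l \<in> S)"
  have "take k0 l \<in> S" "k0 \<le> k"
    unfolding k0_def by (auto intro: LeastI[of _ k] Least_le k(2))
  moreover have "\<And>j. j < k0 \<Longrightarrow> take j l \<notin> S"
    unfolding k0_def by (rule not_less_Least)
  ultimately have "take k0 l \<in> first_hits S" "l \<in> leaves_below d (take k0 l)"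
    using k(1) l by (auto simp: first_hits_def leaves_below_def min_def)
  then show "l \<in> (\<Union>v\<in>first_hits S. leaves_below d v)" by blast
qed

lemma distS_le_S_path:
  "S_path V E S u v xs \<Longrightarrow> distS V E S u v \<le> enat (length xs - 1)"
  unfolding distS_def by (rule Inf_lower) blast

lemma distS_self:
  assumes "u \<in> V" "u \<in> S"
  shows "distS V E S u u = 0"
proof -
  have "S_path V E S u u [u]"
    using assms unfolding S_path_def is_path_def by auto
  then show ?thesis
    using distS_le_S_path[of V E S u u "[u]"] by (simp add: enat_0)
qed

lemma wS_ge_sum_powr:
  assumes "finite S" "F \<subseteq> S" "\<And>v. v \<in> F \<Longrightarrow> distS V E S u v \<le> enat (n v)"
  shows "(\<Sum>v\<in>F. (1/2::real) powr (real (n v) - 1)) \<le> wS V E S u"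
proof -
  let ?w = "\<lambda>v. case distS V E S u v of enat m \<Rightarrow> (1/2::real) powr (real m - 1) | \<infinity> \<Rightarrow> 0"
  have "(1/2) powr (real (n v) - 1) \<le> ?w v" if v: "v \<in> F" for v
  proof -
    obtain m where "distS V E S u v = enat m" "m \<le> n v"
      using assms(3)[OF v] by (cases "distS V E S u v") auto
    then show ?thesis by (simp add: powr_mono')
  qed
  then have "(\<Sum>v\<in>F. (1/2::real) powr (real (n v) - 1)) \<le> (\<Sum>v\<in>F. ?w v)"
    by (rule sum_mono)
  also have "\<dots> \<le> (\<Sum>v\<in>S. ?w v)"
    using assms(1,2) by (intro sum_mono2) (auto split: enat.split)
  finally show ?thesis unfolding wS_def .
qed

lemma wS_ge_2:
  assumes "finite S" "u \<in> V" "u \<in> S"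
  shows "2 \<le> wS V E S u"
  using wS_ge_sum_powr[of S "{u}" V E u "\<lambda>_. 0"] assms
  by (simp add: distS_self powr_minus)

lemma distS_root_first_hit:
  assumes v: "v \<in> tree_V d" "v \<in> first_hits S" and root: "[] \<notin> S"
  shows "distS (tree_V d) tree_E S [] v \<le> enat (length v)"
proof -
  define xs where "xs = map (\<lambda>k. take k v) [0..<Suc (length v)]"
  have len: "length xs = Suc (length v)" by (simp add: xs_def)
  have nth: "\<And>i. i < Suc (length v) \<Longrightarrow> xs ! i = take i v"
    by (simp add: xs_def del: upt_Suc)
  have hd: "hd xs = []" and last: "last xs = v"
    using nth[of 0] nth[of "length v"] len hd_conv_nth[of xs] last_conv_nth[of xs] by force+
  have "inj_on (\<lambda>k. take k v) {0..<Suc (length v)}"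
    by (rule inj_onI) (metis atLeastLessThan_iff length_take less_Suc_eq_le min.absorb2)
  then have "distinct xs"
    unfolding xs_def by (simp add: distinct_map del: upt_Suc)
  moreover have "set xs \<subseteq> tree_V d"
    using v(1) take_in_tree_V by (auto simp: xs_def)
  moreover have "tree_E (xs ! i) (xs ! Suc i)" if "Suc i < length xs" for i
    using that len nth[of i] nth[of "Suc i"] unfolding tree_E_def
    by (auto simp: take_Suc_conv_app_nth)
  moreover have "{hd xs, last xs} \<inter> S = {v}"
    using v(2) root hd last by (auto simp: first_hits_def)
  moreover have "xs ! i \<notin> S" if "0 < i" "Suc i < length xs" for i
    using that v(2) nth len by (auto simp: first_hits_def)
  ultimately have "S_path (tree_V d) tree_E S [] v xs"
    using len hd last unfolding S_path_def is_path_def by auto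
  then show ?thesis
    using distS_le_S_path len by fastforce
qed

lemma wS_ge_leaves_hit:
  assumes S: "S \<subseteq> tree_V d" and root: "[] \<notin> S"
  shows "2 * real (card {l \<in> leaves d. nonempty_prefixes l \<inter> S \<noteq> {}}) / 2 ^ d
         \<le> wS (tree_V d) tree_E S tree_root"
proof -
  have fS: "finite S" using S finite_tree_V finite_subset by blast
  have fF: "finite (first_hits S)" using fS unfolding first_hits_def by simp
  have F: "v \<in> tree_V d" "v \<noteq> []" "length v \<le> d" if "v \<in> first_hits S" for v
    using that S root unfolding first_hits_def tree_V_def by auto
  have "card {l \<in> leaves d. nonempty_prefixes l \<inter> S \<noteq> {}}
        \<le> card (\<Union>v\<in>first_hits S. leaves_below d v)"
    using fF finite_leaves
    by (intro card_mono[OF _ leaves_hit_subset_first_hits]) (auto simp: leaves_below_def)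
  also have "\<dots> \<le> (\<Sum>v\<in>first_hits S. card (leaves_below d v))"
    by (rule card_UN_le[OF fF])
  also have "\<dots> \<le> (\<Sum>v\<in>first_hits S. 2 ^ (d - length v))"
    by (intro sum_mono card_leaves_below F)
  finally have "real (card {l \<in> leaves d. nonempty_prefixes l \<inter> S \<noteq> {}})
      \<le> real (\<Sum>v\<in>first_hits S. 2 ^ (d - length v))"
    by (simp only: of_nat_le_iff)
  then have "2 * real (card {l \<in> leaves d. nonempty_prefixes l \<inter> S \<noteq> {}}) / 2 ^ d
      \<le> 2 * real (\<Sum>v\<in>first_hits S. 2 ^ (d - length v)) / 2 ^ d"
    by (intro divide_right_mono mult_left_mono) auto
  also have "\<dots> = (\<Sum>v\<in>first_hits S. (1/2) powr (real (length v) - 1))"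
  proof (simp only: of_nat_sum sum_distrib_left sum_divide_distrib, intro sum.cong refl)
    fix v assume "v \<in> first_hits S"
    then have "(2::real) ^ (d - length v) = 2 ^ d / 2 ^ length v"
      using F by (simp add: power_diff)
    then show "2 * real (2 ^ (d - length v)) / 2 ^ d = (1/2::real) powr (real (length v) - 1)"
      by (simp add: powr_diff powr_realpow power_divide)
  qed
  also have "\<dots> \<le> wS (tree_V d) tree_E S tree_root"
    unfolding tree_root_def using fS F root
    by (intro wS_ge_sum_powr distS_root_first_hit) (auto simp: first_hits_def)
  finally show ?thesis .
qed

lemma many_leaves_unhit_if_wS_lt_1:
  assumes d: "d \<ge> 1" and S: "S \<subseteq> tree_V d" and w: "wS (tree_V d) tree_E S tree_root < 1"
  shows "2 ^ d < real (card {l \<in> leaves d. nonempty_prefixes l \<inter> S = {}})"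
proof -
  define H where "H = {l \<in> leaves d. nonempty_prefixes l \<inter> S \<noteq> {}}"
  define N where "N = {l \<in> leaves d. nonempty_prefixes l \<inter> S = {}}"
  have "[] \<notin> S"
  proof
    assume "[] \<in> S"
    moreover have "finite S" using S finite_tree_V finite_subset by blast
    ultimately have "2 \<le> wS (tree_V d) tree_E S tree_root"
      unfolding tree_root_def by (intro wS_ge_2) (auto simp: tree_V_def)
    with w show False by simp
  qed
  then have "2 * real (card H) / 2 ^ d < 1"
    using wS_ge_leaves_hit[OF S] w unfolding H_def by linarith
  then have "2 * real (card H) < 2 ^ d"
    by (simp add: divide_less_eq)
  moreover have "card H + card N = card (leaves d)"
  proof -
    have "finite H" "finite N" "H \<inter> N = {}" "H \<union> N = leaves d"
      using finite_leaves unfolding H_def N_def by auto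
    then show ?thesis by (metis card_Un_disjoint)
  qed
  moreover have "real (card (leaves d)) = 3 / 2 * 2 ^ d"
    using d by (cases d) (simp_all add: card_leaves)
  ultimately show ?thesis
    unfolding N_def by linarith
qed

theorem mainTheorem9:
  fixes d :: nat and p :: real
  assumes "d \<ge> 1" and "0 \<le> p" and "p \<le> 1"
  shows "rand_subset_prob (tree_V d) p
           (\<lambda>S. wS (tree_V d) tree_E S tree_root < 1)
         \<le> p / 2 + 3 / 2 * exp (- p * real d)"
proof -
  let ?unhit = "\<lambda>S. real (card {l \<in> leaves d. nonempty_prefixes l \<inter> S = {}})"
  have "(if wS (tree_V d) tree_E S tree_root < 1 then 1 else 0) \<le> ?unhit S / 2 ^ d"
    if "S \<subseteq> tree_V d" for S
    using many_leaves_unhit_if_wS_lt_1[OF assms(1) that] by (auto simp: le_divide_eq)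
  then have "rand_subset_prob (tree_V d) p (\<lambda>S. wS (tree_V d) tree_E S tree_root < 1)
      \<le> rand_subset_expect (tree_V d) p (\<lambda>S. ?unhit S / 2 ^ d)"
    unfolding rand_subset_prob_eq_expect using assms by (intro rand_subset_expect_mono)
  also have "\<dots> = (\<Sum>l\<in>leaves d. (1 - p) ^ card (nonempty_prefixes l)) / 2 ^ d"
    unfolding rand_subset_expect_divide
    using finite_tree_V finite_leaves nonempty_prefixes_subset_tree_V
    by (subst rand_subset_expect_count_disjoint) (auto simp: leaves_def)
  also have "\<dots> = real (card (leaves d)) * (1 - p) ^ d / 2 ^ d"
    by (simp add: card_nonempty_prefixes leaves_def[of d])
  also have "\<dots> = 3 / 2 * (1 - p) ^ d"
    using assms(1) by (cases d) (simp_all add: card_leaves)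
  also have "\<dots> \<le> 3 / 2 * exp (- p * real d)"
    using exp_ge_one_minus_x_over_n_power_n[of "p * real d" d] assms by simp
  also have "\<dots> \<le> p / 2 + 3 / 2 * exp (- p * real d)"
    using assms by simp
  finally show ?thesis .
qed

end
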